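(* Let $G$ be a finite graph, let $L=\{L_v\subset \mathbb{R}:v\in V(G)\}$ be an assignment of finite lists of real numbers to the vertices of $G$, and suppose that $f:V(G)\to \mathbb{Z}$ satisfies $f(v)<|L_v|$ for every $v\in V(G)$ and $\sum_{v\in V(G)} f(v)=|E(G)|-2$. If $G$ is not $L$-colorable, then for each color $c$, $$\sum_{\{u,v\}\subseteq V(G)} [x^{f+1_u+1_v}]\,P_G \cdot \chi_{L,c}(u)\chi_{L,c}(v) + \sum_{v\in V(G)} [x^{f+2\cdot 1_v}]\,P_G \cdot \chi_{L,c}(v)=0,$$ and for any distinct colors $c_1$ and $c_2$, $$\sum_{\{u,v\}\subseteq V(G)} [x^{f+1_u+1_v}]\,P_G \cdot (\chi_{L,c_1}(u)\chi_{L,c_2}(v)+\chi_{L,c_2}(u)\chi_{L,c_1}(v))+\sum_{v\in V(G)} [x^{f+2\cdot 1_v}]\,P_G \cdot \chi_{L,c_1}(v)\chi_{L,c_2}(v)=0,$$ where the sums over $\{u,v\}\subseteq V(G)$ range over unordered pairs of distinct vertices.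
   Context: An $L$-coloring of $G$ is a function $\varphi$ with $\varphi(v)\in L_v$ for all $v\in V(G)$ and $\varphi(u)\neq\varphi(v)$ for every edge $uv\in E(G)$; $G$ is $L$-colorable if an $L$-coloring exists. The graph polynomial $P_G$ is the polynomial in variables $x_v$ ($v\in V(G)$) defined by fixing an orientation $\vec G$ of $G$ and setting $P_G=\prod_{(u,v)\in E(\vec G)}(x_v-x_u)$; it is determined up to sign by $G$. For a function $g:V(G)\to\mathbb{Z}$ with nonnegative values, $x^g=\prod_{v\in V(G)}x_v^{g(v)}$, and $[x^g]\,q$ denotes the coefficient of the monomial $x^g$ in a polynomial $q$ (taken to be $0$ if $g$ has a negative value). For $z\in V(G)$, $1_z:V(G)\to\{0,1\}$ is the function with $1_z(z)=1$ and $1_z(u)=0$ for $u\neq z$. For a color $c$, the characteristic vector $\chi_{L,c}:V(G)\to\{0,1\}$ is defined by $\chi_{L,c}(v)=1$ if $c\in L_v$ and $\chi_{L,c}(v)=0$ otherwise. *)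

theory Defs
  imports Complex_Main "HOL-Library.Poly_Mapping"
begin

text \<open>Multivariate real polynomials in variables indexed by vertices:
  monomials are finitely supported exponent vectors (poly_mapping from vertices to nat).\<close>
type_synonym 'v mpoly = "('v \<Rightarrow>\<^sub>0 nat) \<Rightarrow>\<^sub>0 real"

definition mvar :: "'v \<Rightarrow> 'v mpoly" where
  "mvar v = Poly_Mapping.single (Poly_Mapping.single v 1) 1"

definition simple_graph :: "'v set \<Rightarrow> 'v set set \<Rightarrow> bool" where
  "simple_graph V E \<longleftrightarrow> finite V \<and> (\<forall>e\<in>E. e \<subseteq> V \<and> card e = 2)"

text \<open>Graph polynomial, using the orientation of each edge from its smaller to its
  larger endpoint (P_G is determined up to sign anyway).\<close>
definition graph_poly :: "'v::linorder set set \<Rightarrow> 'v mpoly" where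
  "graph_poly E = (\<Prod>e\<in>E. mvar (Max e) - mvar (Min e))"

text \<open>Coefficient of x^g for an integer-valued g on V; zero if g has a negative value.\<close>
definition coeff_at :: "'v set \<Rightarrow> 'v mpoly \<Rightarrow> ('v \<Rightarrow> int) \<Rightarrow> real" where
  "coeff_at V q g =
     (if \<exists>v\<in>V. g v < 0 then 0
      else Poly_Mapping.lookup q (\<Sum>v\<in>V. Poly_Mapping.single v (nat (g v))))"

definition ind1 :: "'v \<Rightarrow> 'v \<Rightarrow> int" where
  "ind1 z u = (if u = z then 1 else 0)"

definition chi :: "('v \<Rightarrow> real set) \<Rightarrow> real \<Rightarrow> 'v \<Rightarrow> real" where
  "chi L c v = (if c \<in> L v then 1 else 0)"

definition L_colorable :: "'v set \<Rightarrow> 'v set set \<Rightarrow> ('v \<Rightarrow> real set) \<Rightarrow> bool" where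
  "L_colorable V E L \<longleftrightarrow> (\<exists>\<phi>. (\<forall>v\<in>V. \<phi> v \<in> L v) \<and>
       (\<forall>u v. {u, v} \<in> E \<longrightarrow> \<phi> u \<noteq> \<phi> v))"

end

(* If G is not L-colourable, its graph polynomial P vanishes on the grid of list colourings.
   Summing P against the Lagrange weights of this grid, shifted by the exponents |L v| - 1 - f v,
   expresses 0 through coefficients of P: the monomial x^m contributes the product over v of the
   divided differences of t^(m v + |L v| - 1 - f v) at the nodes L v, and since
   deg m = |E| = \<Sum>f + 2 only m = f + 1_u + 1_v and m = f + 2 * 1_v survive, weighted by
   (\<Sum>L u)(\<Sum>L v) and h_2(L v).  Replacing each colour x by x + l * \<omega> x keeps G non-colourable
   for all but finitely many l, so this relation becomes a quadratic polynomial in l that vanishes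
   identically; its leading coefficient is the same relation with the colours weighted by \<omega>.
   Taking for \<omega> the indicator of one colour, or of two colours, gives the two identities. *)

theory Submission
  imports Defs "HOL-Library.FuncSet"
begin

section \<open>Evaluation and homogeneity of polynomials\<close>

definition monomial_eval :: "'v set \<Rightarrow> ('v \<Rightarrow> real) \<Rightarrow> ('v \<Rightarrow>\<^sub>0 nat) \<Rightarrow> real" where
  "monomial_eval V a m = (\<Prod>v\<in>V. a v ^ Poly_Mapping.lookup m v)"

definition mpoly_eval :: "'v set \<Rightarrow> ('v \<Rightarrow> real) \<Rightarrow> 'v mpoly \<Rightarrow> real" where
  "mpoly_eval V a q = (\<Sum>m\<in>Poly_Mapping.keys q. Poly_Mapping.lookup q m * monomial_eval V a m)"

lemma monomial_eval_add: "monomial_eval V a (m + m') = monomial_eval V a m * monomial_eval V a m'"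
  by (simp add: monomial_eval_def lookup_add power_add prod.distrib)

lemma mpoly_eval_0 [simp]: "mpoly_eval V a 0 = 0"
  by (simp add: mpoly_eval_def)

lemma mpoly_eval_add: "mpoly_eval V a (p + q) = mpoly_eval V a p + mpoly_eval V a q"
  unfolding mpoly_eval_def
  by (rule setsum_keys_plus_distrib[where f = "\<lambda>m c. c * monomial_eval V a m"]) (auto simp: distrib_right)

lemma mpoly_eval_single: "mpoly_eval V a (Poly_Mapping.single m c) = c * monomial_eval V a m"
  by (simp add: mpoly_eval_def)

lemma mpoly_eval_uminus: "mpoly_eval V a (- p) = - mpoly_eval V a p"
  by (simp add: mpoly_eval_def sum_negf)

lemma mpoly_eval_diff: "mpoly_eval V a (p - q) = mpoly_eval V a p - mpoly_eval V a q"
  using mpoly_eval_add[of V a p "- q"] by (simp add: mpoly_eval_uminus)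

lemma update_eq_add_single:
  assumes "k \<notin> Poly_Mapping.keys p"
  shows "Poly_Mapping.update k b p = p + Poly_Mapping.single k b"
  using assms
  by (intro poly_mapping_eqI) (auto simp: lookup_update lookup_add lookup_single in_keys_iff when_def)

lemma mpoly_eval_single_mult:
  "mpoly_eval V a (Poly_Mapping.single m c * q) = c * monomial_eval V a m * mpoly_eval V a q"
proof (induction q rule: update_induct)
  case (update m' c' q)
  then show ?case
    by (simp add: update_eq_add_single distrib_left mpoly_eval_add mult_single mpoly_eval_single
        monomial_eval_add)
qed simp

lemma mpoly_eval_mult: "mpoly_eval V a (p * q) = mpoly_eval V a p * mpoly_eval V a q"
proof (induction p rule: update_induct)
  case (update m c p)
  then show ?case
    by (simp add: update_eq_add_single distrib_right mpoly_eval_add mpoly_eval_single_mult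
        mpoly_eval_single)
qed simp

lemma mpoly_eval_1 [simp]: "mpoly_eval V a 1 = 1"
  using mpoly_eval_single[of V a 0 1] by (simp add: monomial_eval_def)

lemma mpoly_eval_prod:
  "finite I \<Longrightarrow> mpoly_eval V a (\<Prod>i\<in>I. F i) = (\<Prod>i\<in>I. mpoly_eval V a (F i))"
  by (induction I rule: finite_induct) (auto simp: mpoly_eval_mult)

lemma mpoly_eval_mvar:
  assumes "finite V" "v \<in> V"
  shows "mpoly_eval V a (mvar v) = a v"
proof -
  have "monomial_eval V a (Poly_Mapping.single v 1) = (\<Prod>w\<in>V. if v = w then a w else 1)"
    unfolding monomial_eval_def by (rule prod.cong) (auto simp: lookup_single when_def)
  then show ?thesis
    using assms by (simp add: mvar_def mpoly_eval_single)
qed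

definition homogeneous :: "'v set \<Rightarrow> nat \<Rightarrow> 'v mpoly \<Rightarrow> bool" where
  "homogeneous V d q \<longleftrightarrow> (\<forall>m\<in>Poly_Mapping.keys q.
     Poly_Mapping.keys m \<subseteq> V \<and> (\<Sum>v\<in>V. Poly_Mapping.lookup m v) = d)"

lemma homogeneous_mult:
  assumes "homogeneous V d p" "homogeneous V d' q"
  shows "homogeneous V (d + d') (p * q)"
  unfolding homogeneous_def
proof
  fix m assume "m \<in> Poly_Mapping.keys (p * q)"
  then obtain x y where m: "m = x + y" "x \<in> Poly_Mapping.keys p" "y \<in> Poly_Mapping.keys q"
    using keys_mult by blast
  then have "Poly_Mapping.keys m \<subseteq> V"
    using assms keys_add[of x y] unfolding homogeneous_def by blast
  moreover have "(\<Sum>v\<in>V. Poly_Mapping.lookup m v) = d + d'"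
    using assms m unfolding homogeneous_def by (simp add: lookup_add sum.distrib)
  ultimately show "Poly_Mapping.keys m \<subseteq> V \<and> (\<Sum>v\<in>V. Poly_Mapping.lookup m v) = d + d'"
    by blast
qed

lemma homogeneous_prod:
  assumes "finite I" "\<forall>i\<in>I. homogeneous V (d i) (F i)"
  shows "homogeneous V (\<Sum>i\<in>I. d i) (\<Prod>i\<in>I. F i)"
  using assms
proof (induction I rule: finite_induct)
  case empty
  then show ?case by (simp add: homogeneous_def)
qed (simp add: homogeneous_mult)

lemma homogeneous_mvar:
  assumes "finite V" "v \<in> V"
  shows "homogeneous V 1 (mvar v)"
proof -
  have "(\<Sum>w\<in>V. Poly_Mapping.lookup (Poly_Mapping.single v (1::nat)) w) = (\<Sum>w\<in>V. if v = w then 1 else 0)"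
    by (rule sum.cong) (auto simp: lookup_single when_def)
  then show ?thesis
    using assms by (simp add: homogeneous_def mvar_def del: One_nat_def)
qed

lemma homogeneous_diff:
  assumes "homogeneous V d p" "homogeneous V d q"
  shows "homogeneous V d (p - q)"
  using assms keys_diff[of p q] unfolding homogeneous_def by blast

lemma coeff_at_eq_sum_keys:
  assumes fin: "finite V" and keys: "\<forall>m\<in>Poly_Mapping.keys P. Poly_Mapping.keys m \<subseteq> V"
  shows "coeff_at V P g =
    (\<Sum>m\<in>Poly_Mapping.keys P. if \<forall>w\<in>V. int (Poly_Mapping.lookup m w) = g w then Poly_Mapping.lookup P m else 0)"
proof (cases "\<exists>v\<in>V. g v < 0")
  case True
  then have no_match: "\<not> (\<forall>w\<in>V. int (Poly_Mapping.lookup m w) = g w)" for m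
    by force
  show ?thesis
    using True by (simp add: coeff_at_def no_match)
next
  case False
  define m0 where "m0 = (\<Sum>v\<in>V. Poly_Mapping.single v (nat (g v)))"
  have lookup_m0: "Poly_Mapping.lookup m0 w = (if w \<in> V then nat (g w) else 0)" for w
  proof -
    have "Poly_Mapping.lookup m0 w = (\<Sum>v\<in>V. if v = w then nat (g v) else 0)"
      unfolding m0_def lookup_sum by (intro sum.cong) (auto simp: lookup_single when_def)
    then show ?thesis
      using fin by simp
  qed
  have "(\<forall>w\<in>V. int (Poly_Mapping.lookup m w) = g w) \<longleftrightarrow> m = m0" if "m \<in> Poly_Mapping.keys P" for m
  proof
    assume "\<forall>w\<in>V. int (Poly_Mapping.lookup m w) = g w"
    moreover have "Poly_Mapping.lookup m w = 0" if "w \<notin> V" for w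
      using keys \<open>m \<in> Poly_Mapping.keys P\<close> that by (metis in_keys_iff subsetD)
    ultimately show "m = m0"
      by (intro poly_mapping_eqI) (metis lookup_m0 nat_int)
  qed (use lookup_m0 False in auto)
  then have "(\<Sum>m\<in>Poly_Mapping.keys P. if \<forall>w\<in>V. int (Poly_Mapping.lookup m w) = g w then Poly_Mapping.lookup P m else 0)
      = (\<Sum>m\<in>Poly_Mapping.keys P. if m0 = m then Poly_Mapping.lookup P m else 0)"
    by (intro sum.cong) auto
  also have "\<dots> = Poly_Mapping.lookup P m0"
    by (simp add: in_keys_iff)
  finally show ?thesis
    using False by (simp add: coeff_at_def m0_def)
qed

section \<open>Divided differences of powers\<close>

(* divdiff_power A k is the divided difference of x ^ k at the nodes A.  For k + 1 \<ge> card A it is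
   the complete homogeneous symmetric polynomial of degree k + 1 - card A in the elements of A,
   and complete_homog2 is the one of degree 2. *)
definition lagrange_weight :: "real set \<Rightarrow> real \<Rightarrow> real" where
  "lagrange_weight A x = inverse (\<Prod>y\<in>A - {x}. x - y)"

definition divdiff_power :: "real set \<Rightarrow> nat \<Rightarrow> real" where
  "divdiff_power A k = (\<Sum>x\<in>A. x ^ k * lagrange_weight A x)"

definition complete_homog2 :: "real set \<Rightarrow> real" where
  "complete_homog2 A = ((\<Sum>A) ^ 2 + (\<Sum>x\<in>A. x ^ 2)) / 2"

lemma lagrange_weight_remove:
  assumes "finite A" "c \<in> A" "x \<in> A" "x \<noteq> c"
  shows "lagrange_weight A x * (x - c) = lagrange_weight (A - {c}) x"
proof -
  have "A - {x} - {c} = A - {c} - {x}"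
    by auto
  then have "(\<Prod>y\<in>A - {x}. x - y) = (x - c) * (\<Prod>y\<in>A - {c} - {x}. x - y)"
    using assms by (metis prod.remove finite_Diff insert_Diff insert_iff)
  then show ?thesis
    using assms(4) by (simp add: lagrange_weight_def inverse_mult_distrib)
qed

lemma divdiff_power_remove:
  assumes "finite A" "c \<in> A"
  shows "divdiff_power A (Suc k) = c * divdiff_power A k + divdiff_power (A - {c}) k"
proof -
  have "divdiff_power A (Suc k) - c * divdiff_power A k = (\<Sum>x\<in>A. x ^ k * (lagrange_weight A x * (x - c)))"
    unfolding divdiff_power_def by (simp add: sum_distrib_left sum_subtractf[symmetric] algebra_simps)
  also have "\<dots> = (\<Sum>x\<in>A - {c}. x ^ k * (lagrange_weight A x * (x - c)))"
    using assms by (intro sum.mono_neutral_right) auto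
  also have "\<dots> = divdiff_power (A - {c}) k"
    unfolding divdiff_power_def using assms by (intro sum.cong) (auto simp: lagrange_weight_remove)
  finally show ?thesis
    by simp
qed

lemma divdiff_power_insert:
  "finite B \<Longrightarrow> c \<notin> B \<Longrightarrow>
    divdiff_power (insert c B) (Suc k) = c * divdiff_power (insert c B) k + divdiff_power B k"
  using divdiff_power_remove[of "insert c B" c k] by simp

lemma divdiff_power_0:
  "finite A \<Longrightarrow> divdiff_power A 0 = (if card A = 1 then 1 else 0)"
proof (induction "card A" arbitrary: A rule: less_induct)
  case less
  show ?case
  proof (cases "card A \<le> 1")
    case True
    then have "A = {} \<or> (\<exists>x. A = {x})"
      using less.prems by (metis card_0_eq card_1_singleton_iff le_Suc_eq le_zero_eq One_nat_def)
    then show ?thesis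
      by (auto simp: divdiff_power_def lagrange_weight_def)
  next
    case False
    then obtain b c where bc: "b \<in> A" "c \<in> A" "b \<noteq> c"
      using card_le_Suc0_iff_eq[OF less.prems] by auto
    have "card A > 0"
      using bc less.prems card_gt_0_iff by blast
    then have "divdiff_power (A - {b}) 0 = divdiff_power (A - {c}) 0"
      using less.hyps[of "A - {b}"] less.hyps[of "A - {c}"] less.prems bc
      by (simp add: card_Diff_singleton)
    then have "b * divdiff_power A 0 = c * divdiff_power A 0"
      using divdiff_power_remove[OF less.prems bc(1), of 0] divdiff_power_remove[OF less.prems bc(2), of 0]
      by auto
    then show ?thesis
      using bc(3) False by simp
  qed
qed

lemma divdiff_power_below:
  "finite A \<Longrightarrow> k + 2 \<le> card A \<Longrightarrow> divdiff_power A k = 0"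
proof (induction k arbitrary: A)
  case 0
  then show ?case
    by (simp add: divdiff_power_0)
next
  case (Suc k)
  then obtain c where "c \<in> A"
    by fastforce
  then show ?case
    using Suc by (simp add: divdiff_power_remove card_Diff_singleton)
qed

lemma divdiff_power_pred_card:
  "finite A \<Longrightarrow> k + 1 = card A \<Longrightarrow> divdiff_power A k = 1"
proof (induction A arbitrary: k rule: finite_induct)
  case (insert c B)
  show ?case
  proof (cases k)
    case 0
    then show ?thesis
      using insert by (simp add: divdiff_power_0)
  next
    case (Suc k')
    have "divdiff_power (insert c B) k' = 0"
      using insert Suc by (intro divdiff_power_below) auto
    moreover have "divdiff_power B k' = 1"
      using insert Suc by simp
    ultimately show ?thesis
      unfolding Suc using divdiff_power_insert[OF insert(1,2), of k'] by simp
  qed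
qed simp

lemma divdiff_power_card:
  "finite A \<Longrightarrow> divdiff_power A (card A) = \<Sum>A"
proof (induction A rule: finite_induct)
  case (insert c B)
  then show ?case
    by (simp add: divdiff_power_insert divdiff_power_pred_card)
qed (simp add: divdiff_power_def)

lemma divdiff_power_Suc_card:
  "finite A \<Longrightarrow> divdiff_power A (Suc (card A)) = complete_homog2 A"
proof (induction A rule: finite_induct)
  case (insert c B)
  have "divdiff_power (insert c B) (Suc (card B)) = \<Sum>(insert c B)"
    using divdiff_power_card[of "insert c B"] insert by simp
  then show ?case
    using insert
    by (simp add: divdiff_power_insert complete_homog2_def power2_eq_square algebra_simps)
qed (simp add: divdiff_power_def complete_homog2_def)

lemma divdiff_power_offset:
  assumes "finite A" "int k = int (card A) - 1 + j"
  shows "j < 0 \<Longrightarrow> divdiff_power A k = 0"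
    and "j = 0 \<Longrightarrow> divdiff_power A k = 1"
    and "j = 1 \<Longrightarrow> divdiff_power A k = \<Sum>A"
    and "j = 2 \<Longrightarrow> divdiff_power A k = complete_homog2 A"
proof -
  show "j < 0 \<Longrightarrow> divdiff_power A k = 0"
    using assms by (intro divdiff_power_below) auto
  show "j = 0 \<Longrightarrow> divdiff_power A k = 1"
    using assms by (intro divdiff_power_pred_card) auto
  have "j = 1 \<Longrightarrow> k = card A"
    using assms(2) by linarith
  then show "j = 1 \<Longrightarrow> divdiff_power A k = \<Sum>A"
    using divdiff_power_card[OF assms(1)] by simp
  have "j = 2 \<Longrightarrow> k = Suc (card A)"
    using assms(2) by linarith
  then show "j = 2 \<Longrightarrow> divdiff_power A k = complete_homog2 A"
    using divdiff_power_Suc_card[OF assms(1)] by simp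
qed

lemma sum_grid_mpoly_eval:
  assumes "finite V" "\<forall>v\<in>V. finite (L v)"
  shows "(\<Sum>a\<in>PiE V L. mpoly_eval V a P * (\<Prod>v\<in>V. a v ^ e v * lagrange_weight (L v) (a v))) =
    (\<Sum>m\<in>Poly_Mapping.keys P. Poly_Mapping.lookup P m *
      (\<Prod>v\<in>V. divdiff_power (L v) (Poly_Mapping.lookup m v + e v)))"
proof -
  let ?t = "\<lambda>m v x. x ^ (Poly_Mapping.lookup m v + e v) * lagrange_weight (L v) x"
  have "monomial_eval V a m * (\<Prod>v\<in>V. a v ^ e v * lagrange_weight (L v) (a v)) =
      (\<Prod>v\<in>V. ?t m v (a v))" for a m
    unfolding monomial_eval_def prod.distrib[symmetric] by (simp add: power_add mult.assoc)
  then have "mpoly_eval V a P * (\<Prod>v\<in>V. a v ^ e v * lagrange_weight (L v) (a v)) =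
      (\<Sum>m\<in>Poly_Mapping.keys P. Poly_Mapping.lookup P m * (\<Prod>v\<in>V. ?t m v (a v)))" for a
    by (simp add: mpoly_eval_def sum_distrib_right mult.assoc)
  then have "(\<Sum>a\<in>PiE V L. mpoly_eval V a P * (\<Prod>v\<in>V. a v ^ e v * lagrange_weight (L v) (a v))) =
      (\<Sum>m\<in>Poly_Mapping.keys P. Poly_Mapping.lookup P m * (\<Sum>a\<in>PiE V L. \<Prod>v\<in>V. ?t m v (a v)))"
    by (simp add: sum_distrib_left sum.swap[of _ "PiE V L"])
  also have "\<dots> = (\<Sum>m\<in>Poly_Mapping.keys P. Poly_Mapping.lookup P m *
      (\<Prod>v\<in>V. divdiff_power (L v) (Poly_Mapping.lookup m v + e v)))"
    using assms by (simp add: prod_sum_PiE divdiff_power_def)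
  finally show ?thesis .
qed

section \<open>Coefficient sums of degree two\<close>

definition quadratic_coeff_sum ::
    "'v::linorder set \<Rightarrow> 'v mpoly \<Rightarrow> ('v \<Rightarrow> int) \<Rightarrow> ('v \<Rightarrow> 'v \<Rightarrow> real) \<Rightarrow> ('v \<Rightarrow> real) \<Rightarrow> real" where
  "quadratic_coeff_sum V P f \<alpha> \<beta> =
     (\<Sum>(u, v)\<in>{(u, v). u \<in> V \<and> v \<in> V \<and> u < v}. coeff_at V P (\<lambda>w. f w + ind1 u w + ind1 v w) * \<alpha> u v)
     + (\<Sum>v\<in>V. coeff_at V P (\<lambda>w. f w + 2 * ind1 v w) * \<beta> v)"

lemma quadratic_coeff_sum_eq_sum_keys:
  assumes "finite V" "\<forall>m\<in>Poly_Mapping.keys P. Poly_Mapping.keys m \<subseteq> V"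
  shows "quadratic_coeff_sum V P f \<alpha> \<beta> =
    (\<Sum>m\<in>Poly_Mapping.keys P. Poly_Mapping.lookup P m *
      ((\<Sum>(u, v)\<in>{(u, v). u \<in> V \<and> v \<in> V \<and> u < v}.
          if \<forall>w\<in>V. int (Poly_Mapping.lookup m w) - f w = ind1 u w + ind1 v w then \<alpha> u v else 0)
       + (\<Sum>v\<in>V. if \<forall>w\<in>V. int (Poly_Mapping.lookup m w) - f w = 2 * ind1 v w then \<beta> v else 0)))"
proof -
  have shifted: "(\<forall>w\<in>V. int (Poly_Mapping.lookup m w) = f w + t w) \<longleftrightarrow>
      (\<forall>w\<in>V. int (Poly_Mapping.lookup m w) - f w = t w)" for m t
    by auto
  have coeff: "coeff_at V P (\<lambda>w. f w + t w) * c =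
      (\<Sum>m\<in>Poly_Mapping.keys P. Poly_Mapping.lookup P m *
        (if \<forall>w\<in>V. int (Poly_Mapping.lookup m w) - f w = t w then c else 0))" for t c
    unfolding coeff_at_eq_sum_keys[OF assms] sum_distrib_right shifted
    by (intro sum.cong) auto
  have "(\<Sum>(u, v)\<in>{(u, v). u \<in> V \<and> v \<in> V \<and> u < v}.
          coeff_at V P (\<lambda>w. f w + ind1 u w + ind1 v w) * \<alpha> u v) =
      (\<Sum>m\<in>Poly_Mapping.keys P. Poly_Mapping.lookup P m *
        (\<Sum>(u, v)\<in>{(u, v). u \<in> V \<and> v \<in> V \<and> u < v}.
          if \<forall>w\<in>V. int (Poly_Mapping.lookup m w) - f w = ind1 u w + ind1 v w then \<alpha> u v else 0))"
    using coeff[of "\<lambda>w. ind1 _ w + ind1 _ w"]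
    by (simp add: add.assoc case_prod_unfold sum_distrib_left) (rule sum.swap)
  moreover have "(\<Sum>v\<in>V. coeff_at V P (\<lambda>w. f w + 2 * ind1 v w) * \<beta> v) =
      (\<Sum>m\<in>Poly_Mapping.keys P. Poly_Mapping.lookup P m *
        (\<Sum>v\<in>V. if \<forall>w\<in>V. int (Poly_Mapping.lookup m w) - f w = 2 * ind1 v w then \<beta> v else 0))"
    using coeff[of "\<lambda>w. 2 * ind1 _ w"] by (simp add: sum_distrib_left) (rule sum.swap)
  ultimately show ?thesis
    by (simp add: quadratic_coeff_sum_def distrib_left sum.distrib)
qed

lemma quadratic_coeff_sum_cong:
  assumes "\<forall>u\<in>V. \<forall>v\<in>V. \<alpha> u v = \<alpha>' u v" "\<forall>v\<in>V. \<beta> v = \<beta>' v"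
  shows "quadratic_coeff_sum V P f \<alpha> \<beta> = quadratic_coeff_sum V P f \<alpha>' \<beta>'"
  unfolding quadratic_coeff_sum_def using assms by (intro arg_cong2[where f = "(+)"] sum.cong) auto

lemma quadratic_coeff_sum_add:
  "quadratic_coeff_sum V P f (\<lambda>u v. \<alpha> u v + \<alpha>' u v) (\<lambda>v. \<beta> v + \<beta>' v) =
    quadratic_coeff_sum V P f \<alpha> \<beta> + quadratic_coeff_sum V P f \<alpha>' \<beta>'"
  by (simp add: quadratic_coeff_sum_def distrib_left sum.distrib case_prod_unfold)

lemma quadratic_coeff_sum_scale:
  "quadratic_coeff_sum V P f (\<lambda>u v. c * \<alpha> u v) (\<lambda>v. c * \<beta> v) = c * quadratic_coeff_sum V P f \<alpha> \<beta>"
  by (simp add: quadratic_coeff_sum_def distrib_left sum_distrib_left case_prod_unfold mult_ac)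

lemma nonneg_sum_eq_term_imp_zero:
  fixes s :: "'v \<Rightarrow> int"
  assumes "finite V" "\<forall>v\<in>V. s v \<ge> 0" "u \<in> V" "(\<Sum>v\<in>V. s v) = s u"
  shows "\<forall>w\<in>V - {u}. s w = 0"
proof -
  have "(\<Sum>v\<in>V - {u}. s v) = 0"
    using assms by (simp add: sum.remove)
  then show ?thesis
    using assms sum_nonneg_eq_0_iff[of "V - {u}" s] by auto
qed

lemma nonneg_sum_eq_2_cases:
  fixes s :: "'v::linorder \<Rightarrow> int"
  assumes fin: "finite V" and nonneg: "\<forall>v\<in>V. s v \<ge> 0" and sum2: "(\<Sum>v\<in>V. s v) = 2"
  obtains (double) u where "u \<in> V" "\<forall>w\<in>V. s w = 2 * ind1 u w"
    | (pair) u v where "u \<in> V" "v \<in> V" "u < v" "\<forall>w\<in>V. s w = ind1 u w + ind1 v w"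
proof -
  have "\<exists>u\<in>V. s u \<noteq> 0"
    using sum2 by (metis sum.neutral zero_neq_numeral)
  then obtain u where u: "u \<in> V" "s u > 0"
    using nonneg by force
  have split_u: "(\<Sum>v\<in>V. s v) = s u + (\<Sum>v\<in>V - {u}. s v)"
    using fin u by (simp add: sum.remove)
  have "(\<Sum>v\<in>V - {u}. s v) \<ge> 0"
    using nonneg by (auto intro: sum_nonneg)
  then consider "s u = 2" | "s u = 1"
    using u sum2 split_u by linarith
  then show thesis
  proof cases
    case 1
    then have "(\<Sum>v\<in>V. s v) = s u"
      using sum2 by simp
    then have "\<forall>w\<in>V - {u}. s w = 0"
      by (rule nonneg_sum_eq_term_imp_zero[OF fin nonneg u(1)])
    then show thesis
      using double[OF u(1)] 1 by (auto simp: ind1_def)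
  next
    case 2
    then have rest: "(\<Sum>v\<in>V - {u}. s v) = 1"
      using sum2 split_u by simp
    then have "\<exists>v\<in>V - {u}. s v \<noteq> 0"
      by (metis sum.neutral zero_neq_one)
    then obtain v where v: "v \<in> V - {u}" "s v > 0"
      using nonneg by (metis DiffD1 order_le_neq_trans)
    have "(\<Sum>w\<in>V - {u} - {v}. s w) \<ge> 0"
      using nonneg by (auto intro: sum_nonneg)
    then have "s v = 1"
      using fin v rest sum.remove[of "V - {u}" v s] by simp
    then have zero: "\<forall>w\<in>V - {u} - {v}. s w = 0"
      using nonneg_sum_eq_term_imp_zero[of "V - {u}" s v] fin nonneg v rest by simp
    have shape: "\<forall>w\<in>V. s w = ind1 u w + ind1 v w"
    proof
      fix w assume "w \<in> V"
      then show "s w = ind1 u w + ind1 v w"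
        using 2 \<open>s v = 1\<close> v zero by (cases "w = u"; cases "w = v") (simp_all add: ind1_def)
    qed
    show thesis
    proof (cases "u < v")
      case True
      then show thesis
        using pair u(1) v(1) shape by blast
    next
      case False
      then have "v < u"
        using v by auto
      moreover have "\<forall>w\<in>V. s w = ind1 v w + ind1 u w"
        using shape by (simp add: add.commute)
      ultimately show thesis
        using pair u(1) v(1) by blast
    qed
  qed
qed

lemma ind1_pair_eq_iff:
  fixes u v x y :: "'v::linorder"
  assumes "u \<in> V" "v \<in> V" "u < v" "x < y"
  shows "(\<forall>w\<in>V. ind1 u w + ind1 v w = ind1 x w + ind1 y w) \<longleftrightarrow> (x, y) = (u, v)"
proof
  assume H: "\<forall>w\<in>V. ind1 u w + ind1 v w = ind1 x w + ind1 y w"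
  have "ind1 x u + ind1 y u = 1" "ind1 x v + ind1 y v = 1"
    using bspec[OF H assms(1)] bspec[OF H assms(2)] less_imp_neq[OF assms(3)]
    by (simp_all add: ind1_def)
  then have "u = x \<or> u = y" "v = x \<or> v = y"
    by (auto simp: ind1_def split: if_splits)
  then show "(x, y) = (u, v)"
    using assms(3,4) by (auto dest: less_not_sym)
qed simp

lemma ind1_double_eq_iff:
  assumes "u \<in> V" "x \<in> V"
  shows "(\<forall>w\<in>V. 2 * ind1 u w = 2 * ind1 x w) \<longleftrightarrow> x = u"
  using assms by (auto simp: ind1_def)

lemma ind1_double_eq_pair_imp_eq:
  assumes "u \<in> V" "\<forall>w\<in>V. s w = 2 * ind1 u w" "\<forall>w\<in>V. s w = ind1 x w + ind1 y w"
  shows "x = y"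
proof -
  have "ind1 x u + ind1 y u = 2"
    using bspec[OF assms(2) assms(1)] bspec[OF assms(3) assms(1)] by (simp add: ind1_def)
  then show ?thesis
    by (auto simp: ind1_def split: if_splits)
qed

lemma prod_eq_quadratic_terms:
  fixes s :: "'v::linorder \<Rightarrow> int" and G S H :: "'v \<Rightarrow> real"
  assumes fin: "finite V" and sum2: "(\<Sum>v\<in>V. s v) = 2"
    and neg: "\<forall>v\<in>V. s v < 0 \<longrightarrow> G v = 0" and G0: "\<forall>v\<in>V. s v = 0 \<longrightarrow> G v = 1"
    and G1: "\<forall>v\<in>V. s v = 1 \<longrightarrow> G v = S v" and G2: "\<forall>v\<in>V. s v = 2 \<longrightarrow> G v = H v"
  shows "(\<Prod>v\<in>V. G v) =
      (\<Sum>(u, v)\<in>{(u, v). u \<in> V \<and> v \<in> V \<and> u < v}.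
          if \<forall>w\<in>V. s w = ind1 u w + ind1 v w then S u * S v else 0)
    + (\<Sum>v\<in>V. if \<forall>w\<in>V. s w = 2 * ind1 v w then H v else 0)"
    (is "_ = ?pairs + ?doubles")
proof (cases "\<exists>z\<in>V. s z < 0")
  case True
  then obtain z where z: "z \<in> V" "s z < 0"
    by blast
  have "s z \<noteq> ind1 x z + ind1 y z" "s z \<noteq> 2 * ind1 x z" for x y
    using z(2) by (auto simp: ind1_def)
  then have "(if \<forall>w\<in>V. s w = ind1 x w + ind1 y w then S x * S y else 0) = 0"
    "(if \<forall>w\<in>V. s w = 2 * ind1 x w then H x else 0) = 0" for x y
    using z(1) by fastforce+
  then have "?pairs = 0" "?doubles = 0"
    by (simp_all add: case_prod_beta)
  moreover have "(\<Prod>v\<in>V. G v) = 0"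
    using fin z neg by (auto intro!: prod_zero)
  ultimately show ?thesis
    by simp
next
  case False
  let ?P2 = "{(u, v). u \<in> V \<and> v \<in> V \<and> u < v}"
  have "finite ?P2"
    using fin by (auto intro: finite_subset[of _ "V \<times> V"])
  have prod_off: "(\<Prod>v\<in>V. G v) = (\<Prod>v\<in>U. G v)" if "U \<subseteq> V" "\<forall>w\<in>V - U. s w = 0" for U
    using fin that G0 by (intro prod.mono_neutral_right) auto
  show ?thesis
  proof (rule nonneg_sum_eq_2_cases[OF fin _ sum2])
    show "\<forall>v\<in>V. s v \<ge> 0"
      using False by auto
  next
    fix u assume u: "u \<in> V" and s_u: "\<forall>w\<in>V. s w = 2 * ind1 u w"
    have "(\<Prod>v\<in>V. G v) = H u"
      using prod_off[of "{u}"] u s_u G2 by (simp add: ind1_def)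
    moreover have "?pairs = 0"
    proof (intro sum.neutral ballI)
      fix p assume "p \<in> ?P2"
      then obtain x y where "p = (x, y)" "x < y"
        by auto
      then show "(case p of (x, y) \<Rightarrow> if \<forall>w\<in>V. s w = ind1 x w + ind1 y w then S x * S y else 0) = 0"
        using ind1_double_eq_pair_imp_eq[OF u s_u, of x y] by auto
    qed
    moreover have "?doubles = (\<Sum>v\<in>V. if v = u then H v else 0)"
      using s_u ind1_double_eq_iff[OF u] by (intro sum.cong) auto
    ultimately show ?thesis
      using fin u by simp
  next
    fix u v assume uv: "u \<in> V" "v \<in> V" "u < v" and s_uv: "\<forall>w\<in>V. s w = ind1 u w + ind1 v w"
    have "(\<Prod>v\<in>V. G v) = S u * S v"
      using prod_off[of "{u, v}"] uv s_uv G1 by (simp add: ind1_def)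
    moreover have "?pairs = S u * S v"
    proof -
      have "?pairs = (\<Sum>p\<in>?P2. if p = (u, v) then S u * S v else 0)"
        using s_uv ind1_pair_eq_iff[OF uv] by (intro sum.cong) (auto split: if_splits)
      also have "\<dots> = S u * S v"
        using \<open>finite ?P2\<close> uv by (subst sum.delta) auto
      finally show ?thesis .
    qed
    moreover have "?doubles = 0"
      using ind1_double_eq_pair_imp_eq[OF _ _ s_uv] uv(3) by (intro sum.neutral) auto
    ultimately show ?thesis
      by simp
  qed
qed

lemma quadratic_coeff_sum_vanishing_on_grid:
  assumes fin: "finite V" and L_fin: "\<forall>v\<in>V. finite (L v)" and f_lt: "\<forall>v\<in>V. f v < int (card (L v))"
    and hom: "homogeneous V d P" and deg: "(\<Sum>v\<in>V. f v) + 2 = int d"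
    and vanish: "\<forall>a\<in>PiE V L. mpoly_eval V a P = 0"
  shows "quadratic_coeff_sum V P f (\<lambda>u v. \<Sum>(L u) * \<Sum>(L v)) (\<lambda>v. complete_homog2 (L v)) = 0"
proof -
  define e where "e v = nat (int (card (L v)) - 1 - f v)" for v
  have keys: "\<forall>m\<in>Poly_Mapping.keys P. Poly_Mapping.keys m \<subseteq> V"
    using hom by (simp add: homogeneous_def)
  have monomial_term: "(\<Prod>v\<in>V. divdiff_power (L v) (Poly_Mapping.lookup m v + e v)) =
      (\<Sum>(u, v)\<in>{(u, v). u \<in> V \<and> v \<in> V \<and> u < v}.
          if \<forall>w\<in>V. int (Poly_Mapping.lookup m w) - f w = ind1 u w + ind1 v w then \<Sum>(L u) * \<Sum>(L v) else 0)
      + (\<Sum>v\<in>V. if \<forall>w\<in>V. int (Poly_Mapping.lookup m w) - f w = 2 * ind1 v w then complete_homog2 (L v) else 0)"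
    if m: "m \<in> Poly_Mapping.keys P" for m
  proof (rule prod_eq_quadratic_terms[OF fin])
    have "(\<Sum>v\<in>V. int (Poly_Mapping.lookup m v)) = int d"
      using hom m unfolding homogeneous_def by (metis of_nat_sum)
    then show "(\<Sum>v\<in>V. int (Poly_Mapping.lookup m v) - f v) = 2"
      using deg by (simp add: sum_subtractf)
    have index: "int (Poly_Mapping.lookup m v + e v) = int (card (L v)) - 1 + (int (Poly_Mapping.lookup m v) - f v)"
      if "v \<in> V" for v
      using f_lt that by (simp add: e_def)
    show "\<forall>v\<in>V. int (Poly_Mapping.lookup m v) - f v < 0 \<longrightarrow> divdiff_power (L v) (Poly_Mapping.lookup m v + e v) = 0"
      and "\<forall>v\<in>V. int (Poly_Mapping.lookup m v) - f v = 0 \<longrightarrow> divdiff_power (L v) (Poly_Mapping.lookup m v + e v) = 1"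
      and "\<forall>v\<in>V. int (Poly_Mapping.lookup m v) - f v = 1 \<longrightarrow> divdiff_power (L v) (Poly_Mapping.lookup m v + e v) = \<Sum>(L v)"
      and "\<forall>v\<in>V. int (Poly_Mapping.lookup m v) - f v = 2 \<longrightarrow> divdiff_power (L v) (Poly_Mapping.lookup m v + e v) = complete_homog2 (L v)"
      using divdiff_power_offset[OF _ index] L_fin by auto
  qed
  have "0 = (\<Sum>a\<in>PiE V L. mpoly_eval V a P * (\<Prod>v\<in>V. a v ^ e v * lagrange_weight (L v) (a v)))"
    using vanish by simp
  also have "\<dots> = quadratic_coeff_sum V P f (\<lambda>u v. \<Sum>(L u) * \<Sum>(L v)) (\<lambda>v. complete_homog2 (L v))"
    unfolding sum_grid_mpoly_eval[OF fin L_fin] quadratic_coeff_sum_eq_sum_keys[OF fin keys]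
    by (intro sum.cong) (simp_all add: monomial_term)
  finally show ?thesis ..
qed

section \<open>Perturbing the colours\<close>

lemma quadratic_lead_coeff_eq_0:
  fixes a b c :: real
  assumes "finite F" "\<forall>l. l \<notin> F \<longrightarrow> a * l ^ 2 + b * l + c = 0"
  shows "a = 0"
proof (rule ccontr)
  assume "a \<noteq> 0"
  define p where "p i = (if i = 0 then c else if i = 1 then b else a)" for i :: nat
  have "(\<Sum>i\<le>2. p i * l ^ i) = a * l ^ 2 + b * l + c" for l
    by (simp add: p_def numeral_2_eq_2)
  moreover have "finite {l. (\<Sum>i\<le>2. p i * l ^ i) = 0}"
    using polyfun_rootbound[of p 2 2] \<open>a \<noteq> 0\<close> by (simp add: p_def)
  ultimately have "finite (- F)"
    using assms(2) by (auto elim!: finite_subset[rotated])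
  then show False
    using assms(1) infinite_UNIV_char_0 by (metis Compl_partition2 finite_UnI)
qed

lemma finite_not_inj_on_perturbation:
  fixes \<omega> :: "real \<Rightarrow> real"
  assumes "finite K"
  shows "finite {l. \<not> inj_on (\<lambda>x. x + l * \<omega> x) K}"
proof (rule finite_subset)
  show "{l. \<not> inj_on (\<lambda>x. x + l * \<omega> x) K} \<subseteq> (\<lambda>(x, y). (y - x) / (\<omega> x - \<omega> y)) ` (K \<times> K)"
  proof
    fix l assume "l \<in> {l. \<not> inj_on (\<lambda>x. x + l * \<omega> x) K}"
    then obtain x y where xy: "x \<in> K" "y \<in> K" "x \<noteq> y" "l * (\<omega> x - \<omega> y) = y - x"
      by (auto simp: inj_on_def algebra_simps)
    then have "\<omega> x - \<omega> y \<noteq> 0"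
      by auto
    then have "l = (y - x) / (\<omega> x - \<omega> y)"
      using xy(4) by (simp add: field_simps)
    then show "l \<in> (\<lambda>(x, y). (y - x) / (\<omega> x - \<omega> y)) ` (K \<times> K)"
      using xy(1,2) by force
  qed
  show "finite ((\<lambda>(x, y). (y - x) / (\<omega> x - \<omega> y)) ` (K \<times> K))"
    using assms by simp
qed

lemma sum_image_perturbation:
  fixes \<omega> :: "real \<Rightarrow> real"
  assumes "inj_on (\<lambda>x. x + l * \<omega> x) A"
  shows "\<Sum>((\<lambda>x. x + l * \<omega> x) ` A) = \<Sum>A + l * (\<Sum>x\<in>A. \<omega> x)"
  using assms by (simp add: sum.reindex sum.distrib sum_distrib_left)

lemma complete_homog2_image_perturbation:
  fixes \<omega> :: "real \<Rightarrow> real"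
  assumes "inj_on (\<lambda>x. x + l * \<omega> x) A"
  shows "complete_homog2 ((\<lambda>x. x + l * \<omega> x) ` A) =
    complete_homog2 A + l * (\<Sum>A * (\<Sum>x\<in>A. \<omega> x) + (\<Sum>x\<in>A. x * \<omega> x))
      + l ^ 2 * (((\<Sum>x\<in>A. \<omega> x) ^ 2 + (\<Sum>x\<in>A. \<omega> x ^ 2)) / 2)"
proof -
  have "(\<Sum>y\<in>(\<lambda>x. x + l * \<omega> x) ` A. y ^ 2) = (\<Sum>x\<in>A. x ^ 2 + 2 * l * (x * \<omega> x) + l ^ 2 * \<omega> x ^ 2)"
    using assms by (simp add: sum.reindex power2_eq_square algebra_simps)
  also have "\<dots> = (\<Sum>x\<in>A. x ^ 2) + 2 * l * (\<Sum>x\<in>A. x * \<omega> x) + l ^ 2 * (\<Sum>x\<in>A. \<omega> x ^ 2)"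
    by (simp add: sum.distrib sum_distrib_left)
  finally show ?thesis
    using sum_image_perturbation[OF assms]
    by (simp add: complete_homog2_def power2_eq_square field_simps)
qed

lemma quadratic_coeff_sum_weights:
  fixes \<omega> :: "real \<Rightarrow> real"
  assumes fin: "finite V" "\<forall>v\<in>V. finite (L v)"
    and relabel: "\<forall>\<psi>. inj_on \<psi> (\<Union>v\<in>V. L v) \<longrightarrow>
      quadratic_coeff_sum V P f (\<lambda>u v. \<Sum>(\<psi> ` L u) * \<Sum>(\<psi> ` L v)) (\<lambda>v. complete_homog2 (\<psi> ` L v)) = 0"
  shows "quadratic_coeff_sum V P f (\<lambda>u v. (\<Sum>x\<in>L u. \<omega> x) * (\<Sum>x\<in>L v. \<omega> x))
      (\<lambda>v. ((\<Sum>x\<in>L v. \<omega> x) ^ 2 + (\<Sum>x\<in>L v. \<omega> x ^ 2)) / 2) = 0"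
    (is "quadratic_coeff_sum V P f ?\<alpha>2 ?\<beta>2 = 0")
proof -
  define W where "W v = (\<Sum>x\<in>L v. \<omega> x)" for v
  let ?\<alpha>0 = "\<lambda>u v. \<Sum>(L u) * \<Sum>(L v)" and ?\<beta>0 = "\<lambda>v. complete_homog2 (L v)"
  let ?\<alpha>1 = "\<lambda>u v. \<Sum>(L u) * W v + W u * \<Sum>(L v)"
  let ?\<beta>1 = "\<lambda>v. \<Sum>(L v) * W v + (\<Sum>x\<in>L v. x * \<omega> x)"
  let ?Q = "quadratic_coeff_sum V P f"
  have "finite (\<Union>v\<in>V. L v)"
    using fin by blast
  then have bad: "finite {l. \<not> inj_on (\<lambda>x. x + l * \<omega> x) (\<Union>v\<in>V. L v)}"
    by (rule finite_not_inj_on_perturbation)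
  have "?Q ?\<alpha>2 ?\<beta>2 * l ^ 2 + ?Q ?\<alpha>1 ?\<beta>1 * l + ?Q ?\<alpha>0 ?\<beta>0 = 0"
    if inj: "inj_on (\<lambda>x. x + l * \<omega> x) (\<Union>v\<in>V. L v)" for l
  proof -
    let ?\<psi> = "\<lambda>x. x + l * \<omega> x"
    have inj_v: "inj_on ?\<psi> (L v)" if "v \<in> V" for v
      using that by (intro inj_on_subset[OF inj]) blast
    have "0 = ?Q (\<lambda>u v. \<Sum>(?\<psi> ` L u) * \<Sum>(?\<psi> ` L v)) (\<lambda>v. complete_homog2 (?\<psi> ` L v))"
      using relabel inj by simp
    also have "\<dots> = ?Q (\<lambda>u v. ?\<alpha>0 u v + (l * ?\<alpha>1 u v + l ^ 2 * ?\<alpha>2 u v))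
        (\<lambda>v. ?\<beta>0 v + (l * ?\<beta>1 v + l ^ 2 * ?\<beta>2 v))"
      using inj_v by (intro quadratic_coeff_sum_cong)
        (simp_all add: sum_image_perturbation complete_homog2_image_perturbation W_def algebra_simps
          power2_eq_square)
    also have "\<dots> = ?Q ?\<alpha>0 ?\<beta>0 + (l * ?Q ?\<alpha>1 ?\<beta>1 + l ^ 2 * ?Q ?\<alpha>2 ?\<beta>2)"
      by (simp only: quadratic_coeff_sum_add quadratic_coeff_sum_scale)
    finally show ?thesis
      by (simp add: algebra_simps)
  qed
  then show ?thesis
    using quadratic_lead_coeff_eq_0[OF bad] by blast
qed

section \<open>Non-colourable list assignments\<close>

lemma simple_graph_finite_edges: "simple_graph V E \<Longrightarrow> finite E"
  unfolding simple_graph_def by (meson Pow_iff finite_Pow_iff finite_subset subsetI)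

lemma simple_graph_edge_ends:
  assumes "simple_graph V E" "e \<in> E"
  shows "Min e \<in> V" "Max e \<in> V"
proof -
  have "e \<subseteq> V" "card e = 2"
    using assms by (auto simp: simple_graph_def)
  moreover from this have "finite e" "e \<noteq> {}"
    by (auto intro: card_ge_0_finite)
  ultimately show "Min e \<in> V" "Max e \<in> V"
    using Min_in Max_in by blast+
qed

lemma homogeneous_graph_poly:
  assumes "simple_graph V E"
  shows "homogeneous V (card E) (graph_poly E)"
proof -
  have "finite V"
    using assms by (simp add: simple_graph_def)
  then have "\<forall>e\<in>E. homogeneous V 1 (mvar (Max e) - mvar (Min e))"
    using simple_graph_edge_ends[OF assms] by (blast intro: homogeneous_diff homogeneous_mvar)
  then have "homogeneous V (\<Sum>e\<in>E. 1) (\<Prod>e\<in>E. mvar (Max e) - mvar (Min e))"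
    using simple_graph_finite_edges[OF assms] by (rule homogeneous_prod[rotated])
  then show ?thesis
    by (simp add: graph_poly_def)
qed

lemma mpoly_eval_graph_poly:
  assumes "simple_graph V E"
  shows "mpoly_eval V a (graph_poly E) = (\<Prod>e\<in>E. a (Max e) - a (Min e))"
proof -
  have "finite V"
    using assms by (simp add: simple_graph_def)
  then show ?thesis
    using simple_graph_finite_edges[OF assms] simple_graph_edge_ends[OF assms]
    by (auto simp: graph_poly_def mpoly_eval_prod mpoly_eval_diff mpoly_eval_mvar intro!: prod.cong)
qed

lemma mpoly_eval_graph_poly_grid:
  assumes "simple_graph V E" "\<not> L_colorable V E L" "a \<in> PiE V L"
  shows "mpoly_eval V a (graph_poly E) = 0"
proof -
  obtain u v where uv: "{u, v} \<in> E" "a u = a v"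
    using assms(2,3) unfolding L_colorable_def by blast
  then have "a (Max {u, v}) - a (Min {u, v}) = 0"
    by (cases "u \<le> v") (auto simp: max_def min_def)
  then have "(\<Prod>e\<in>E. a (Max e) - a (Min e)) = 0"
    using uv(1) assms(1) simple_graph_finite_edges by (intro prod_zero bexI[of _ "{u, v}"])
  then show ?thesis
    using assms(1) by (simp add: mpoly_eval_graph_poly)
qed

lemma L_colorable_image:
  assumes G: "simple_graph V E" and col: "L_colorable V E (\<lambda>v. \<psi> ` L v)"
  shows "L_colorable V E L"
proof -
  obtain \<phi> where \<phi>: "\<forall>v\<in>V. \<phi> v \<in> \<psi> ` L v" "\<forall>u v. {u, v} \<in> E \<longrightarrow> \<phi> u \<noteq> \<phi> v"
    using col unfolding L_colorable_def by blast
  have "\<forall>v\<in>V. \<exists>x. x \<in> L v \<and> \<psi> x = \<phi> v"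
    using \<phi>(1) by fastforce
  then obtain \<phi>' where \<phi>': "\<forall>v\<in>V. \<phi>' v \<in> L v \<and> \<psi> (\<phi>' v) = \<phi> v"
    by (metis (no_types) bchoice)
  show ?thesis
    unfolding L_colorable_def
  proof (intro exI conjI allI impI ballI)
    show "\<phi>' v \<in> L v" if "v \<in> V" for v
      using \<phi>' that by blast
  next
    fix u v assume uv: "{u, v} \<in> E"
    then have "u \<in> V" "v \<in> V"
      using G by (auto simp: simple_graph_def)
    moreover have "\<phi> u \<noteq> \<phi> v"
      using \<phi>(2) uv by blast
    ultimately show "\<phi>' u \<noteq> \<phi>' v"
      using \<phi>' by metis
  qed
qed

lemma noncolorable_weighted_identity:
  fixes V :: "'v::linorder set" and E :: "'v set set"
    and L :: "'v \<Rightarrow> real set" and f :: "'v \<Rightarrow> int" and \<omega> :: "real \<Rightarrow> real"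
  assumes G: "simple_graph V E"
    and L_fin: "\<forall>v\<in>V. finite (L v)"
    and f_lt: "\<forall>v\<in>V. f v < int (card (L v))"
    and f_sum: "(\<Sum>v\<in>V. f v) = int (card E) - 2"
    and notcol: "\<not> L_colorable V E L"
  shows "quadratic_coeff_sum V (graph_poly E) f (\<lambda>u v. (\<Sum>x\<in>L u. \<omega> x) * (\<Sum>x\<in>L v. \<omega> x))
      (\<lambda>v. ((\<Sum>x\<in>L v. \<omega> x) ^ 2 + (\<Sum>x\<in>L v. \<omega> x ^ 2)) / 2) = 0"
proof (rule quadratic_coeff_sum_weights)
  show fin: "finite V"
    using G by (simp add: simple_graph_def)
  show "\<forall>v\<in>V. finite (L v)"
    by (fact L_fin)
  show "\<forall>\<psi>. inj_on \<psi> (\<Union>v\<in>V. L v) \<longrightarrow> quadratic_coeff_sum V (graph_poly E) f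
      (\<lambda>u v. \<Sum>(\<psi> ` L u) * \<Sum>(\<psi> ` L v)) (\<lambda>v. complete_homog2 (\<psi> ` L v)) = 0"
  proof (intro allI impI)
    fix \<psi> :: "real \<Rightarrow> real" assume inj: "inj_on \<psi> (\<Union>v\<in>V. L v)"
    have "card (\<psi> ` L v) = card (L v)" if "v \<in> V" for v
      using that by (intro card_image inj_on_subset[OF inj]) blast
    then have "\<forall>v\<in>V. f v < int (card (\<psi> ` L v))"
      using f_lt by simp
    moreover have "\<not> L_colorable V E (\<lambda>v. \<psi> ` L v)"
      using notcol L_colorable_image[OF G] by blast
    ultimately show "quadratic_coeff_sum V (graph_poly E) f
        (\<lambda>u v. \<Sum>(\<psi> ` L u) * \<Sum>(\<psi> ` L v)) (\<lambda>v. complete_homog2 (\<psi> ` L v)) = 0"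
      using fin L_fin homogeneous_graph_poly[OF G] f_sum mpoly_eval_graph_poly_grid[OF G]
      by (intro quadratic_coeff_sum_vanishing_on_grid) auto
  qed
qed

lemma noncolorable_chi_identity:
  fixes V :: "'v::linorder set" and E :: "'v set set"
    and L :: "'v \<Rightarrow> real set" and f :: "'v \<Rightarrow> int"
  assumes G: "simple_graph V E"
    and L_fin: "\<forall>v\<in>V. finite (L v)"
    and f_lt: "\<forall>v\<in>V. f v < int (card (L v))"
    and f_sum: "(\<Sum>v\<in>V. f v) = int (card E) - 2"
    and notcol: "\<not> L_colorable V E L"
  shows "quadratic_coeff_sum V (graph_poly E) f (\<lambda>u v. chi L c u * chi L c v) (\<lambda>v. chi L c v) = 0"
proof -
  define \<omega> where "\<omega> x = (if x = c then 1 else 0 :: real)" for x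
  have "\<omega> x ^ 2 = \<omega> x" for x
    by (simp add: \<omega>_def)
  moreover have "(\<Sum>x\<in>L v. \<omega> x) = chi L c v" if "v \<in> V" for v
    using L_fin that by (simp add: \<omega>_def chi_def)
  ultimately have "(\<Sum>x\<in>L v. \<omega> x) = chi L c v" "(\<Sum>x\<in>L v. \<omega> x ^ 2) = chi L c v" if "v \<in> V" for v
    using that by simp_all
  then have "quadratic_coeff_sum V (graph_poly E) f (\<lambda>u v. chi L c u * chi L c v) (\<lambda>v. chi L c v) =
      quadratic_coeff_sum V (graph_poly E) f (\<lambda>u v. (\<Sum>x\<in>L u. \<omega> x) * (\<Sum>x\<in>L v. \<omega> x))
        (\<lambda>v. ((\<Sum>x\<in>L v. \<omega> x) ^ 2 + (\<Sum>x\<in>L v. \<omega> x ^ 2)) / 2)"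
    by (intro quadratic_coeff_sum_cong) (simp_all add: chi_def)
  also have "\<dots> = 0"
    by (rule noncolorable_weighted_identity[OF assms])
  finally show ?thesis .
qed

(* For \<omega> the indicator of {c1, c2} the weighted identity splits into the single-colour
   identities for c1 and c2 plus the claim. *)
lemma noncolorable_chi_pair_identity:
  fixes V :: "'v::linorder set" and E :: "'v set set"
    and L :: "'v \<Rightarrow> real set" and f :: "'v \<Rightarrow> int"
  assumes G: "simple_graph V E"
    and L_fin: "\<forall>v\<in>V. finite (L v)"
    and f_lt: "\<forall>v\<in>V. f v < int (card (L v))"
    and f_sum: "(\<Sum>v\<in>V. f v) = int (card E) - 2"
    and notcol: "\<not> L_colorable V E L"
    and "c1 \<noteq> c2"
  shows "quadratic_coeff_sum V (graph_poly E) f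
      (\<lambda>u v. chi L c1 u * chi L c2 v + chi L c2 u * chi L c1 v) (\<lambda>v. chi L c1 v * chi L c2 v) = 0"
proof -
  let ?Q = "quadratic_coeff_sum V (graph_poly E) f"
  define \<omega> where "\<omega> x = (if x = c1 then 1 else 0) + (if x = c2 then 1 else 0 :: real)" for x
  have "\<omega> x ^ 2 = \<omega> x" for x
    using \<open>c1 \<noteq> c2\<close> by (simp add: \<omega>_def)
  moreover have "(\<Sum>x\<in>L v. \<omega> x) = chi L c1 v + chi L c2 v" if "v \<in> V" for v
    using L_fin that by (simp add: \<omega>_def chi_def sum.distrib)
  ultimately have "(\<Sum>x\<in>L v. \<omega> x) = chi L c1 v + chi L c2 v"
      "(\<Sum>x\<in>L v. \<omega> x ^ 2) = chi L c1 v + chi L c2 v" if "v \<in> V" for v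
    using that by simp_all
  then have "?Q (\<lambda>u v. (\<Sum>x\<in>L u. \<omega> x) * (\<Sum>x\<in>L v. \<omega> x))
        (\<lambda>v. ((\<Sum>x\<in>L v. \<omega> x) ^ 2 + (\<Sum>x\<in>L v. \<omega> x ^ 2)) / 2) =
      ?Q (\<lambda>u v. chi L c1 u * chi L c1 v + (chi L c2 u * chi L c2 v
            + (chi L c1 u * chi L c2 v + chi L c2 u * chi L c1 v)))
        (\<lambda>v. chi L c1 v + (chi L c2 v + chi L c1 v * chi L c2 v))"
    by (intro quadratic_coeff_sum_cong) (simp_all add: chi_def)
  also have "\<dots> = ?Q (\<lambda>u v. chi L c1 u * chi L c1 v) (\<lambda>v. chi L c1 v)
      + (?Q (\<lambda>u v. chi L c2 u * chi L c2 v) (\<lambda>v. chi L c2 v)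
      + ?Q (\<lambda>u v. chi L c1 u * chi L c2 v + chi L c2 u * chi L c1 v) (\<lambda>v. chi L c1 v * chi L c2 v))"
    by (simp only: quadratic_coeff_sum_add)
  also have "\<dots> = ?Q (\<lambda>u v. chi L c1 u * chi L c2 v + chi L c2 u * chi L c1 v) (\<lambda>v. chi L c1 v * chi L c2 v)"
    using noncolorable_chi_identity[OF G L_fin f_lt f_sum notcol] by simp
  finally show ?thesis
    using noncolorable_weighted_identity[OF G L_fin f_lt f_sum notcol] by simp
qed

theorem theorem17:
  fixes V :: "'v::linorder set" and E :: "'v set set"
    and L :: "'v \<Rightarrow> real set" and f :: "'v \<Rightarrow> int"
  assumes G: "simple_graph V E"
    and Lfin: "\<forall>v\<in>V. finite (L v)"
    and f_lt: "\<forall>v\<in>V. f v < int (card (L v))"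
    and f_sum: "(\<Sum>v\<in>V. f v) = int (card E) - 2"
    and notcol: "\<not> L_colorable V E L"
  shows "(\<forall>c. (\<Sum>(u, v)\<in>{(u, v). u \<in> V \<and> v \<in> V \<and> u < v}.
              coeff_at V (graph_poly E) (\<lambda>w. f w + ind1 u w + ind1 v w) * (chi L c u * chi L c v))
          + (\<Sum>v\<in>V. coeff_at V (graph_poly E) (\<lambda>w. f w + 2 * ind1 v w) * chi L c v) = 0)
   \<and> (\<forall>c1 c2. c1 \<noteq> c2 \<longrightarrow>
          (\<Sum>(u, v)\<in>{(u, v). u \<in> V \<and> v \<in> V \<and> u < v}.
              coeff_at V (graph_poly E) (\<lambda>w. f w + ind1 u w + ind1 v w)
                * (chi L c1 u * chi L c2 v + chi L c2 u * chi L c1 v))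
          + (\<Sum>v\<in>V. coeff_at V (graph_poly E) (\<lambda>w. f w + 2 * ind1 v w) * (chi L c1 v * chi L c2 v)) = 0)"
  using noncolorable_chi_identity[OF G Lfin f_lt f_sum notcol]
    noncolorable_chi_pair_identity[OF G Lfin f_lt f_sum notcol]
  unfolding quadratic_coeff_sum_def by blast

end
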